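(* Let $\phi_1$ and $\phi_2$ be finite sets of clauses with $\phi_1\vdash_{UNIT}\phi_2$. Then there exist translations $\mathcal S_1$ of $\phi_1$ and $\mathcal S_2$ of $\phi_2$ to finite sets of Boolean constraints and literals, and a finite set $\mathcal C$ of Boolean constraints and literals, such that $\mathcal S_1\vdash^{\le 3}_{BOOL}\mathcal S_2\cup\mathcal C$ and $\mathcal C$ semantically follows from $\mathcal S_2$.
   Context: Boolean variables range over $\{0,1\}$. A Boolean constraint is a formal expression of one of the forms $x=y$, $\neg x=y$, $x\wedge y=z$, $x\vee y=z$ with $x,y,z$ distinct Boolean variables, interpreted in the expected way. A literal is a variable $x$ or its negation $\neg x$; $\bar u$ is the complement of $u$. A clause is a (possibly empty) disjunction of distinct literals; a unit clause has one literal; $u\vee Q$ denotes a clause containing literal $u$, with $Q$ the disjunction of the rest. Unit propagation $\phi_1\vdash_{UNIT}\phi_2$: $\phi_2$ is obtained from $\phi_1$ by one step of unit resolution (given unit clause $u$ and clause $\bar u\vee Q$ in the set, replace $\bar u\vee Q$ by $Q$) or unit subsumption (given unit clause $u$ and clause $u\vee Q$, delete $u\vee Q$). Translation of clauses: for a clause $Q$ and variable $z$ define $trans(Q=z)$ by induction on the number of literals of $Q$: if $Q$ is a unit clause, $trans(Q=z):=\{Q=z\}$ (an equality or NOT constraint); $trans(x\vee Q_1=z):=\{x\vee y=z\}\cup trans(Q_1=y)$ with $y$ fresh; $trans(\neg x\vee Q_1=z):=\{\neg x=v,\ v\vee y=z\}\cup trans(Q_1=y)$ with $v,y$ fresh.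 For a unit clause $u$, $trans(u):=\{u\}$; for a non-unit clause $Q$, $trans(Q):=\{z\}\cup trans(Q=z)$ with $z$ fresh. A translation of a finite set of clauses $\phi$ is obtained by translating each clause separately (with fresh variables distinct across clauses); it depends on the order of literals chosen and the fresh variables. The proof system BOOL consists of the following rules (constraint, premise $\rightarrow$ conclusion; $x,y,z$ schematic, instantiable by any distinct variables): EQU1: $x=y$, $x=1\rightarrow y=1$; EQU2: $x=y$, $y=1\rightarrow x=1$; EQU3: $x=y$, $x=0\rightarrow y=0$; EQU4: $x=y$, $y=0\rightarrow x=0$; NOT1: $\neg x=y$, $x=1\rightarrow y=0$; NOT2: $\neg x=y$, $x=0\rightarrow y=1$; NOT3: $\neg x=y$, $y=1\rightarrow x=0$; NOT4: $\neg x=y$, $y=0\rightarrow x=1$; AND1: $x\wedge y=z$, $x=1,y=1\rightarrow z=1$; AND2: $x\wedge y=z$, $x=1,z=0\rightarrow y=0$; AND3: $x\wedge y=z$, $y=1,z=0\rightarrow x=0$; AND4: $x\wedge y=z$, $x=0\rightarrow z=0$; AND5: $x\wedge y=z$, $y=0\rightarrow z=0$; AND6: $x\wedge y=z$, $z=1\rightarrow x=1,y=1$; OR1: $x\vee y=z$, $x=1\rightarrow z=1$; OR2: $x\vee y=z$, $x=0,y=0\rightarrow z=0$; OR3: $x\vee y=z$, $x=0,z=1\rightarrow y=1$; OR4: $x\vee y=z$, $y=0,z=1\rightarrow x=1$; OR5: $x\vee y=z$, $y=1\rightarrow z=1$; OR6: $x\vee y=z$, $z=0\rightarrow x=0,y=0$.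 Identify $v=1$ with the literal $v$ and $v=0$ with $\neg v$. A rule with constraint $c$, premise literals $P$, conclusion literals $K$ applies to a finite set $\mathcal S$ of Boolean constraints and literals if $c\in\mathcal S$ and $P\subseteq\mathcal S$; the result is $(\mathcal S\setminus\{c\})\cup K$. $\mathcal S_1\vdash^{\le i}_{BOOL}\mathcal S_2$ means $\mathcal S_2$ is obtained from $\mathcal S_1$ by at most $i$ such applications. A set $\mathcal C$ of Boolean constraints and literals semantically follows from a set $\mathcal S$ if every assignment of $0/1$ values satisfying $\mathcal S$ can be extended (on the variables of $\mathcal C$ not occurring in $\mathcal S$) to an assignment satisfying $\mathcal C$. *)

theory Defs
  imports Main
begin

datatype 'v lit = Pos 'v | Neg 'v

fun var :: "'v lit \<Rightarrow> 'v" where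
  "var (Pos x) = x" | "var (Neg x) = x"

fun comp :: "'v lit \<Rightarrow> 'v lit" where
  "comp (Pos x) = Neg x" | "comp (Neg x) = Pos x"

type_synonym 'v clause = "'v lit set"

definition vars :: "'v clause set \<Rightarrow> 'v set" where
  "vars \<phi> = (\<Union>C\<in>\<phi>. var ` C)"

definition unit_step :: "'v clause set \<Rightarrow> 'v clause set \<Rightarrow> bool" where
  "unit_step \<phi>1 \<phi>2 \<longleftrightarrow>
     (\<exists>u C. {u} \<in> \<phi>1 \<and> C \<in> \<phi>1 \<and> comp u \<in> C \<and> \<phi>2 = (\<phi>1 - {C}) \<union> {C - {comp u}})
   \<or> (\<exists>u C. {u} \<in> \<phi>1 \<and> C \<in> \<phi>1 \<and> u \<in> C \<and> C \<noteq> {u} \<and> \<phi>2 = \<phi>1 - {C})"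

datatype 'v bcon = EqC 'v 'v | NotC 'v 'v | AndC 'v 'v 'v | OrC 'v 'v 'v

text \<open>Elements of constraint sets: Boolean constraints or literals (Pos v is v=1, Neg v is v=0).\<close>
datatype 'v item = Con "'v bcon" | Lit "'v lit"

fun lit_val :: "('v \<Rightarrow> bool) \<Rightarrow> 'v lit \<Rightarrow> bool" where
  "lit_val \<sigma> (Pos x) = \<sigma> x" | "lit_val \<sigma> (Neg x) = (\<not> \<sigma> x)"

fun item_val :: "('v \<Rightarrow> bool) \<Rightarrow> 'v item \<Rightarrow> bool" where
  "item_val \<sigma> (Con (EqC x y)) = (\<sigma> x = \<sigma> y)"
| "item_val \<sigma> (Con (NotC x y)) = ((\<not> \<sigma> x) = \<sigma> y)"
| "item_val \<sigma> (Con (AndC x y z)) = ((\<sigma> x \<and> \<sigma> y) = \<sigma> z)"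
| "item_val \<sigma> (Con (OrC x y z)) = ((\<sigma> x \<or> \<sigma> y) = \<sigma> z)"
| "item_val \<sigma> (Lit l) = lit_val \<sigma> l"

fun bvars :: "'v bcon \<Rightarrow> 'v set" where
  "bvars (EqC x y) = {x, y}" | "bvars (NotC x y) = {x, y}"
| "bvars (AndC x y z) = {x, y, z}" | "bvars (OrC x y z) = {x, y, z}"

fun item_vars :: "'v item \<Rightarrow> 'v set" where
  "item_vars (Con c) = bvars c" | "item_vars (Lit l) = {var l}"

definition ivars :: "'v item set \<Rightarrow> 'v set" where
  "ivars S = (\<Union>i\<in>S. item_vars i)"

definition sat :: "('v \<Rightarrow> bool) \<Rightarrow> 'v item set \<Rightarrow> bool" where
  "sat \<sigma> S \<longleftrightarrow> (\<forall>i\<in>S. item_val \<sigma> i)"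

definition sem_follows :: "'v item set \<Rightarrow> 'v item set \<Rightarrow> bool" where
  "sem_follows S C \<longleftrightarrow>
     (\<forall>\<sigma>. sat \<sigma> S \<longrightarrow> (\<exists>\<tau>. (\<forall>x\<in>ivars S. \<tau> x = \<sigma> x) \<and> sat \<tau> C))"

text \<open>bool_rule c P K: rule with constraint c, premise literals P, conclusion literals K.\<close>
inductive bool_rule :: "'v bcon \<Rightarrow> 'v lit set \<Rightarrow> 'v lit set \<Rightarrow> bool" where
  EQU1: "bool_rule (EqC x y) {Pos x} {Pos y}"
| EQU2: "bool_rule (EqC x y) {Pos y} {Pos x}"
| EQU3: "bool_rule (EqC x y) {Neg x} {Neg y}"
| EQU4: "bool_rule (EqC x y) {Neg y} {Neg x}"
| NOT1: "bool_rule (NotC x y) {Pos x} {Neg y}"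
| NOT2: "bool_rule (NotC x y) {Neg x} {Pos y}"
| NOT3: "bool_rule (NotC x y) {Pos y} {Neg x}"
| NOT4: "bool_rule (NotC x y) {Neg y} {Pos x}"
| AND1: "bool_rule (AndC x y z) {Pos x, Pos y} {Pos z}"
| AND2: "bool_rule (AndC x y z) {Pos x, Neg z} {Neg y}"
| AND3: "bool_rule (AndC x y z) {Pos y, Neg z} {Neg x}"
| AND4: "bool_rule (AndC x y z) {Neg x} {Neg z}"
| AND5: "bool_rule (AndC x y z) {Neg y} {Neg z}"
| AND6: "bool_rule (AndC x y z) {Pos z} {Pos x, Pos y}"
| OR1: "bool_rule (OrC x y z) {Pos x} {Pos z}"
| OR2: "bool_rule (OrC x y z) {Neg x, Neg y} {Neg z}"
| OR3: "bool_rule (OrC x y z) {Neg x, Pos z} {Pos y}"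
| OR4: "bool_rule (OrC x y z) {Neg y, Pos z} {Pos x}"
| OR5: "bool_rule (OrC x y z) {Pos y} {Pos z}"
| OR6: "bool_rule (OrC x y z) {Neg z} {Neg x, Neg y}"

definition bool_step :: "'v item set \<Rightarrow> 'v item set \<Rightarrow> bool" where
  "bool_step S S' \<longleftrightarrow>
     (\<exists>c P K. bool_rule c P K \<and> Con c \<in> S \<and> Lit ` P \<subseteq> S \<and> S' = (S - {Con c}) \<union> Lit ` K)"

definition bool_derives_le :: "nat \<Rightarrow> 'v item set \<Rightarrow> 'v item set \<Rightarrow> bool" where
  "bool_derives_le i S1 S2 \<longleftrightarrow> (\<exists>n\<le>i. (bool_step ^^ n) S1 S2)"

fun lit_con :: "'v lit \<Rightarrow> 'v \<Rightarrow> 'v bcon" where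
  "lit_con (Pos x) z = EqC x z" | "lit_con (Neg x) z = NotC x z"

text \<open>trans_eq Q z S F: S is trans(Q = z) for the literal list Q (order of literals),
  F being the set of fresh variables introduced (not including z).\<close>
inductive trans_eq :: "'v lit list \<Rightarrow> 'v \<Rightarrow> 'v item set \<Rightarrow> 'v set \<Rightarrow> bool" where
  unit: "trans_eq [l] z {Con (lit_con l z)} {}"
| pos: "\<lbrakk>trans_eq Q y S F; y \<notin> F\<rbrakk>
        \<Longrightarrow> trans_eq (Pos x # Q) z (insert (Con (OrC x y z)) S) (insert y F)"
| neg: "\<lbrakk>trans_eq Q y S F; y \<notin> F; v \<notin> F; v \<noteq> y\<rbrakk>
        \<Longrightarrow> trans_eq (Neg x # Q) z ({Con (NotC x v), Con (OrC v y z)} \<union> S) ({v, y} \<union> F)"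

definition trans_clause :: "'v clause \<Rightarrow> 'v item set \<Rightarrow> 'v set \<Rightarrow> bool" where
  "trans_clause C S F \<longleftrightarrow>
     (\<exists>u. C = {u} \<and> S = {Lit u} \<and> F = {})
   \<or> (\<exists>ls z S' F'. distinct ls \<and> set ls = C \<and> length ls \<ge> 2 \<and> trans_eq ls z S' F' \<and> z \<notin> F'
        \<and> S = insert (Lit (Pos z)) S' \<and> F = insert z F')"

definition is_translation :: "'v clause set \<Rightarrow> 'v item set \<Rightarrow> bool" where
  "is_translation \<phi> S \<longleftrightarrow>
     (\<exists>T F. (\<forall>C\<in>\<phi>. trans_clause C (T C) (F C) \<and> F C \<inter> vars \<phi> = {})
        \<and> (\<forall>C\<in>\<phi>. \<forall>D\<in>\<phi>. C \<noteq> D \<longrightarrow> F C \<inter> F D = {})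
        \<and> S = (\<Union>C\<in>\<phi>. T C))"

end

theory Submission
  imports Defs
begin

text \<open>All clauses other than the clause C changed by the step are translated once and shared
  by both translations. If the step is a subsumption, or produces a resolvent that is already
  present, C is entailed by \<phi>2: then the translation of \<phi>1 is that of \<phi>2 plus the translation
  of C, which follows semantically because its fresh variables can be given their defining
  values, and no BOOL step is needed. Otherwise C = \<not>u \<or> C' for a unit u, and C is translated
  with \<not>u as its first literal, around a translation of C' with output y. The unit u makes the
  head constraints fire (NOT1 and OR3, or OR3 alone), turning z = 1 into y = 1, which is the
  translation of C'; if C' is itself a unit, one further step turns y = 1 into that literal.
  What is left over are literals on the fresh variables z, v, y that no longer occur, and
  these follow semantically.\<close>

definition clause_val :: "('v \<Rightarrow> bool) \<Rightarrow> 'v clause \<Rightarrow> bool" where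
  "clause_val \<sigma> C \<longleftrightarrow> (\<exists>l\<in>C. lit_val \<sigma> l)"

definition entails :: "'v clause set \<Rightarrow> 'v clause \<Rightarrow> bool" where
  "entails \<phi> C \<longleftrightarrow> (\<forall>\<sigma>. (\<forall>D\<in>\<phi>. clause_val \<sigma> D) \<longrightarrow> clause_val \<sigma> C)"

lemma ivars_simps [simp]:
  "ivars {} = {}" "ivars (insert i S) = item_vars i \<union> ivars S"
  "ivars (S \<union> S') = ivars S \<union> ivars S'" "ivars (Lit ` L) = var ` L"
  by (auto simp: ivars_def)

lemma item_vars_subset_ivars: "i \<in> S \<Longrightarrow> item_vars i \<subseteq> ivars S"
  by (auto simp: ivars_def)

lemma sat_simps [simp]:
  "sat \<sigma> {}" "sat \<sigma> (insert i S) \<longleftrightarrow> item_val \<sigma> i \<and> sat \<sigma> S"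
  "sat \<sigma> (S \<union> S') \<longleftrightarrow> sat \<sigma> S \<and> sat \<sigma> S'"
  by (auto simp: sat_def)

lemma item_val_cong:
  assumes "\<And>w. w \<in> item_vars i \<Longrightarrow> \<tau> w = \<sigma> w"
  shows "item_val \<tau> i = item_val \<sigma> i"
proof (cases i)
  case (Con c)
  with assms show ?thesis by (cases c) auto
next
  case (Lit l)
  with assms show ?thesis by (cases l) auto
qed

lemma sat_cong: "(\<And>w. w \<in> ivars S \<Longrightarrow> \<tau> w = \<sigma> w) \<Longrightarrow> sat \<tau> S = sat \<sigma> S"
  unfolding sat_def ivars_def by (metis (no_types, lifting) UN_I item_val_cong)

lemma sat_fun_upd [simp]: "w \<notin> ivars S \<Longrightarrow> sat (\<sigma>(w := b)) S = sat \<sigma> S"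
  by (rule sat_cong) auto

section \<open>Translations of single clauses\<close>

lemma trans_eq_nonempty: "trans_eq ls z S F \<Longrightarrow> ls \<noteq> []"
  by (induction rule: trans_eq.induct) auto

lemma trans_eq_finite: "trans_eq ls z S F \<Longrightarrow> finite S"
  by (induction rule: trans_eq.induct) auto

lemma trans_eq_ivars: "trans_eq ls z S F \<Longrightarrow> ivars S \<subseteq> var ` set ls \<union> insert z F"
proof (induction rule: trans_eq.induct)
  case (unit l z)
  then show ?case by (cases l) auto
qed auto

lemma trans_eq_singleton: "trans_eq [l] z S F \<Longrightarrow> S = {Con (lit_con l z)} \<and> F = {}"
  by (cases rule: trans_eq.cases) (auto dest: trans_eq_nonempty)

lemma trans_eq_sound: "trans_eq ls z S F \<Longrightarrow> sat \<sigma> S \<Longrightarrow> \<sigma> z = clause_val \<sigma> (set ls)"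
proof (induction rule: trans_eq.induct)
  case (unit l z)
  then show ?case by (cases l) (auto simp: clause_val_def)
qed (auto simp: clause_val_def)

text \<open>Conversely, every assignment extends to a model of the translation by evaluating the
  fresh variables bottom-up.\<close>
lemma trans_eq_extend:
  assumes "trans_eq ls z S F" "insert z F \<inter> var ` set ls = {}" "z \<notin> F"
  shows "\<exists>\<tau>. (\<forall>w. w \<notin> insert z F \<longrightarrow> \<tau> w = \<sigma> w) \<and> sat \<tau> S"
  using assms
proof (induction rule: trans_eq.induct)
  case (unit l z)
  show ?case
    by (rule exI[of _ "\<sigma>(z := lit_val \<sigma> l)"]) (use unit in \<open>cases l; auto\<close>)
next
  case (pos Q y S F x z)
  then obtain \<tau> where agree: "\<forall>w. w \<notin> insert y F \<longrightarrow> \<tau> w = \<sigma> w" and "sat \<tau> S" by auto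
  moreover have "z \<notin> ivars S" "z \<noteq> x" "z \<noteq> y"
    using trans_eq_ivars[OF pos.hyps(1)] pos.prems by auto
  ultimately have "sat (\<tau>(z := \<tau> x \<or> \<tau> y)) (insert (Con (OrC x y z)) S)" by simp
  moreover have "\<forall>w. w \<notin> insert z (insert y F) \<longrightarrow> (\<tau>(z := \<tau> x \<or> \<tau> y)) w = \<sigma> w"
    using agree by simp
  ultimately show ?case by blast
next
  case (neg Q y S F v x z)
  then obtain \<tau> where agree: "\<forall>w. w \<notin> insert y F \<longrightarrow> \<tau> w = \<sigma> w" and "sat \<tau> S" by auto
  moreover have "z \<notin> ivars S" "v \<notin> ivars S" "z \<noteq> x" "z \<noteq> y" "z \<noteq> v" "v \<noteq> x" "v \<noteq> y"
    using trans_eq_ivars[OF neg.hyps(1)] neg.prems neg.hyps by auto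
  ultimately have "sat (\<tau>(v := \<not> \<tau> x, z := \<not> \<tau> x \<or> \<tau> y)) ({Con (NotC x v), Con (OrC v y z)} \<union> S)"
    by simp
  moreover have "\<forall>w. w \<notin> insert z ({v, y} \<union> F) \<longrightarrow> (\<tau>(v := \<not> \<tau> x, z := \<not> \<tau> x \<or> \<tau> y)) w = \<sigma> w"
    using agree by simp
  ultimately show ?case by blast
qed

lemma trans_eq_exists:
  assumes "infinite (UNIV :: 'v set)"
  shows "ls \<noteq> [] \<Longrightarrow> finite A \<Longrightarrow> \<exists>S F. trans_eq ls (z :: 'v) S F \<and> F \<inter> A = {} \<and> finite F"
proof (induction ls arbitrary: z A)
  case Nil
  then show ?case by simp
next
  case (Cons l ls)
  show ?case
  proof (cases "ls = []")
    case True
    then show ?thesis by (auto intro: trans_eq.unit)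
  next
    case False
    obtain y where y: "y \<notin> A" using ex_new_if_finite[OF assms Cons.prems(2)] by blast
    obtain v where v: "v \<notin> insert y A" using ex_new_if_finite[OF assms] Cons.prems(2) by blast
    obtain S F where SF: "trans_eq ls y S F" "F \<inter> insert v (insert y A) = {}" "finite F"
      using Cons.IH[OF False, of "insert v (insert y A)" y] Cons.prems(2) by auto
    show ?thesis
    proof (cases l)
      case (Pos x)
      have "trans_eq (Pos x # ls) z (insert (Con (OrC x y z)) S) (insert y F)"
        using SF by (auto intro: trans_eq.pos)
      then show ?thesis using Pos SF y by blast
    next
      case (Neg x)
      have "trans_eq (Neg x # ls) z ({Con (NotC x v), Con (OrC v y z)} \<union> S) ({v, y} \<union> F)"
        by (rule trans_eq.neg) (use SF v in auto)
      then show ?thesis using Neg SF y v by blast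
    qed
  qed
qed

lemma trans_clauseE:
  assumes "trans_clause C S F"
  obtains (unit) u where "C = {u}" "S = {Lit u}" "F = {}"
    | (long) ls z S' F' where "distinct ls" "set ls = C" "length ls \<ge> 2" "trans_eq ls z S' F'"
        "z \<notin> F'" "S = insert (Lit (Pos z)) S'" "F = insert z F'"
  using assms unfolding trans_clause_def by metis

lemma trans_clause_finite: "trans_clause C S F \<Longrightarrow> finite S"
  by (erule trans_clauseE) (auto dest: trans_eq_finite)

lemma trans_clause_ivars:
  assumes "trans_clause C S F"
  shows "ivars S \<subseteq> var ` C \<union> F"
  using assms
proof (cases rule: trans_clauseE)
  case (long ls z S' F')
  then show ?thesis using trans_eq_ivars[OF long(4)] by auto
qed auto

lemma trans_clause_sound:
  assumes "trans_clause C S F" "sat \<sigma> S"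
  shows "clause_val \<sigma> C"
  using assms(1)
proof (cases rule: trans_clauseE)
  case (long ls z S' F')
  then show ?thesis using trans_eq_sound[OF long(4), of \<sigma>] assms(2) by auto
qed (use assms(2) in \<open>auto simp: clause_val_def\<close>)

lemma trans_clause_singleton:
  assumes "trans_clause {u} S F"
  shows "S = {Lit u}"
  using assms
proof (cases rule: trans_clauseE)
  case (long ls z S' F')
  then have "length ls = 1" using distinct_card[of ls] by simp
  with long(3) show ?thesis by simp
qed auto

lemma trans_clause_of_trans_eq:
  "trans_eq ls z S F \<Longrightarrow> distinct ls \<Longrightarrow> length ls \<ge> 2 \<Longrightarrow> z \<notin> F
    \<Longrightarrow> trans_clause (set ls) (insert (Lit (Pos z)) S) (insert z F)"
  unfolding trans_clause_def by blast

lemma trans_clause_exists: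
  assumes "infinite (UNIV :: 'v set)" "finite C" "C \<noteq> {}" "finite A"
  shows "\<exists>S F. trans_clause (C :: 'v clause) S F \<and> F \<inter> A = {} \<and> finite F"
proof -
  obtain ls where ls: "distinct ls" "set ls = C" using finite_distinct_list[OF assms(2)] by blast
  show ?thesis
  proof (cases "length ls \<ge> 2")
    case True
    obtain z where z: "z \<notin> A" using ex_new_if_finite[OF assms(1,4)] by blast
    have "ls \<noteq> []" using True by auto
    then obtain S F where "trans_eq ls z S F" "F \<inter> insert z A = {}" "finite F"
      using trans_eq_exists[OF assms(1), of ls "insert z A" z] assms(4) by auto
    then show ?thesis using trans_clause_of_trans_eq[of ls z S F] ls True z by blast
  next
    case False
    then obtain u where "ls = [u]" using ls assms(3) by (cases ls) (auto simp: Suc_le_eq)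
    then show ?thesis using ls unfolding trans_clause_def by auto
  qed
qed

lemma sem_follows_trans_clause:
  assumes "trans_clause C TC FC" "FC \<inter> (ivars S \<union> var ` C) = {}"
    and "\<And>\<sigma>. sat \<sigma> S \<Longrightarrow> clause_val \<sigma> C"
  shows "sem_follows S TC"
  unfolding sem_follows_def
proof (intro allI impI)
  fix \<sigma> assume "sat \<sigma> S"
  then have "clause_val \<sigma> C" by (rule assms(3))
  from assms(1) show "\<exists>\<tau>. (\<forall>x\<in>ivars S. \<tau> x = \<sigma> x) \<and> sat \<tau> TC"
  proof (cases rule: trans_clauseE)
    case (unit u)
    then show ?thesis using \<open>clause_val \<sigma> C\<close> by (auto simp: clause_val_def)
  next
    case (long ls z S' F')
    then obtain \<tau> where agree: "\<forall>w. w \<notin> FC \<longrightarrow> \<tau> w = \<sigma> w" and "sat \<tau> S'"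
      using trans_eq_extend[OF long(4), of \<sigma>] assms(2) by auto
    moreover have "\<tau> z"
    proof -
      have "lit_val \<tau> l = lit_val \<sigma> l" if "l \<in> C" for l
        using that agree assms(2) by (cases l) force+
      then have "clause_val \<tau> C" using \<open>clause_val \<sigma> C\<close> by (auto simp: clause_val_def)
      then show ?thesis using trans_eq_sound[OF long(4) \<open>sat \<tau> S'\<close>] long(2) by simp
    qed
    ultimately show ?thesis using long(6) assms(2) by auto
  qed
qed

lemma sem_follows_fresh_lits:
  assumes "\<forall>l\<in>L. var l \<notin> ivars S" "\<forall>l\<in>L. comp l \<notin> L"
  shows "sem_follows S (Lit ` L)"
  unfolding sem_follows_def
proof (intro allI impI)
  fix \<sigma>
  define \<tau> where "\<tau> w = (if Pos w \<in> L then True else if Neg w \<in> L then False else \<sigma> w)" for w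
  have "\<forall>x\<in>ivars S. \<tau> x = \<sigma> x" using assms(1) by (auto simp: \<tau>_def)
  moreover have "lit_val \<tau> l" if "l \<in> L" for l
    using that assms(2) by (cases l) (auto simp: \<tau>_def)
  ultimately show "\<exists>\<tau>. (\<forall>x\<in>ivars S. \<tau> x = \<sigma> x) \<and> sat \<tau> (Lit ` L)"
    by (auto simp: sat_def)
qed

text \<open>Unlike is_translation, this records the fresh variables Fs, so that further clauses
  can be translated disjointly from them.\<close>
definition fresh_translation :: "'v clause set \<Rightarrow> 'v item set \<Rightarrow> 'v set \<Rightarrow> 'v set \<Rightarrow> bool" where
  "fresh_translation \<phi> S A Fs \<longleftrightarrow>
     (\<exists>T F. (\<forall>C\<in>\<phi>. trans_clause C (T C) (F C) \<and> F C \<inter> A = {})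
        \<and> (\<forall>C\<in>\<phi>. \<forall>D\<in>\<phi>. C \<noteq> D \<longrightarrow> F C \<inter> F D = {})
        \<and> S = (\<Union>C\<in>\<phi>. T C) \<and> Fs = (\<Union>C\<in>\<phi>. F C))"

lemma fresh_translation_empty: "fresh_translation {} {} A {}"
  unfolding fresh_translation_def by simp

lemma fresh_translation_insert:
  assumes "fresh_translation \<phi> S A Fs" "C \<notin> \<phi>"
    and "trans_clause C TC FC" "FC \<inter> (A \<union> Fs) = {}"
  shows "fresh_translation (insert C \<phi>) (TC \<union> S) A (FC \<union> Fs)"
proof -
  obtain T F where TF: "\<forall>D\<in>\<phi>. trans_clause D (T D) (F D) \<and> F D \<inter> A = {}"
    "\<forall>D\<in>\<phi>. \<forall>E\<in>\<phi>. D \<noteq> E \<longrightarrow> F D \<inter> F E = {}" "S = (\<Union>D\<in>\<phi>. T D)" "Fs = (\<Union>D\<in>\<phi>. F D)"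
    using assms(1) unfolding fresh_translation_def by blast
  let ?T = "T(C := TC)" and ?F = "F(C := FC)"
  have "?F D \<inter> ?F E = {}" if "D \<in> insert C \<phi>" "E \<in> insert C \<phi>" "D \<noteq> E" for D E
  proof (cases "D = C \<or> E = C")
    case True
    have "FC \<inter> F G = {}" if "G \<in> \<phi>" for G using that TF(4) assms(4) by blast
    then show ?thesis
      using True \<open>D \<noteq> E\<close> \<open>D \<in> insert C \<phi>\<close> \<open>E \<in> insert C \<phi>\<close> by (auto simp: Int_commute)
  next
    case False
    then show ?thesis using that TF(2) by simp
  qed
  moreover have "\<forall>D\<in>insert C \<phi>. trans_clause D (?T D) (?F D) \<and> ?F D \<inter> A = {}"
    using TF(1) assms(2-4) by auto
  moreover have "TC \<union> S = (\<Union>D\<in>insert C \<phi>. ?T D)" "FC \<union> Fs = (\<Union>D\<in>insert C \<phi>. ?F D)"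
    using TF(3,4) assms(2) by auto
  ultimately show ?thesis unfolding fresh_translation_def by blast
qed

lemma fresh_translation_exists:
  assumes "infinite (UNIV :: 'v set)" "finite \<phi>" "\<forall>C\<in>\<phi>. finite C \<and> C \<noteq> {}" "finite A"
  shows "\<exists>S Fs. fresh_translation (\<phi> :: 'v clause set) S A Fs \<and> finite Fs"
  using assms(2,3)
proof (induction rule: finite_induct)
  case empty
  then show ?case using fresh_translation_empty by blast
next
  case (insert C \<phi>)
  then obtain S Fs where S: "fresh_translation \<phi> S A Fs" "finite Fs" by auto
  obtain TC FC where "trans_clause C TC FC" "FC \<inter> (A \<union> Fs) = {}" "finite FC"
    using trans_clause_exists[OF assms(1), of C "A \<union> Fs"] insert.prems assms(4) S(2) by auto
  then show ?case using fresh_translation_insert[OF S(1) insert.hyps(2)] S(2) by blast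
qed

lemma is_translation_if_fresh:
  assumes "fresh_translation \<phi> S A Fs" "vars \<phi> \<subseteq> A"
  shows "is_translation \<phi> S"
proof -
  obtain T F where "\<forall>C\<in>\<phi>. trans_clause C (T C) (F C) \<and> F C \<inter> A = {}"
    "\<forall>C\<in>\<phi>. \<forall>D\<in>\<phi>. C \<noteq> D \<longrightarrow> F C \<inter> F D = {}" "S = (\<Union>C\<in>\<phi>. T C)"
    using assms(1) unfolding fresh_translation_def by blast
  with assms(2) show ?thesis unfolding is_translation_def by blast
qed

lemma fresh_translation_ivars:
  assumes "fresh_translation \<phi> S A Fs"
  shows "ivars S \<subseteq> vars \<phi> \<union> Fs"
proof -
  obtain T F where TF: "\<forall>C\<in>\<phi>. trans_clause C (T C) (F C)" "S = (\<Union>C\<in>\<phi>. T C)" "Fs = (\<Union>C\<in>\<phi>. F C)"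
    using assms unfolding fresh_translation_def by blast
  have "ivars (T C) \<subseteq> vars \<phi> \<union> Fs" if "C \<in> \<phi>" for C
    using trans_clause_ivars[of C "T C" "F C"] TF that unfolding vars_def by blast
  then show ?thesis unfolding TF(2) ivars_def by blast
qed

lemma fresh_translation_sound:
  assumes "fresh_translation \<phi> S A Fs" "sat \<sigma> S" "D \<in> \<phi>"
  shows "clause_val \<sigma> D"
proof -
  obtain T F where TF: "trans_clause D (T D) (F D)" "T D \<subseteq> S"
    using assms(1,3) unfolding fresh_translation_def by blast
  then have "sat \<sigma> (T D)" using assms(2) unfolding sat_def by blast
  then show ?thesis using trans_clause_sound[OF TF(1)] by blast
qed

lemma fresh_translation_unit: "fresh_translation \<phi> S A Fs \<Longrightarrow> {u} \<in> \<phi> \<Longrightarrow> Lit u \<in> S"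
  unfolding fresh_translation_def by (fastforce dest: trans_clause_singleton)

section \<open>Derivations in BOOL\<close>

lemma bool_step_insert:
  assumes "bool_rule c P K" "Con c \<notin> S" "Lit ` P \<subseteq> S"
  shows "bool_step (insert (Con c) S) (S \<union> Lit ` K)"
  unfolding bool_step_def using assms by (intro exI[of _ c] exI[of _ P] exI[of _ K]) auto

lemma bool_derives_le_refl: "bool_derives_le i S S"
  unfolding bool_derives_le_def by (intro exI[of _ 0]) auto

lemma bool_derives_le_mono: "bool_derives_le i S S' \<Longrightarrow> i \<le> j \<Longrightarrow> bool_derives_le j S S'"
  unfolding bool_derives_le_def using le_trans by blast

lemma bool_derives_le_Suc:
  "bool_step S S' \<Longrightarrow> bool_derives_le i S' S'' \<Longrightarrow> bool_derives_le (Suc i) S S''"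
  unfolding bool_derives_le_def using relpowp_Suc_I2 by (metis Suc_le_mono)

lemma bool_derives_le_trans:
  "bool_derives_le i S S' \<Longrightarrow> bool_derives_le j S' S'' \<Longrightarrow> bool_derives_le (i + j) S S''"
  unfolding bool_derives_le_def by (metis add_mono relpowp_add relcomppI)

lemma bool_derives_resolve_Neg_head:
  assumes "Lit (Pos x) \<in> M" "Lit (Pos z) \<in> M" "Con (NotC x v) \<notin> M" "Con (OrC v y z) \<notin> M"
  shows "bool_derives_le 2 (insert (Con (NotC x v)) (insert (Con (OrC v y z)) M))
           (M \<union> {Lit (Neg v), Lit (Pos y)})"
proof -
  have "bool_step (insert (Con (NotC x v)) (insert (Con (OrC v y z)) M))
          (insert (Con (OrC v y z)) (insert (Lit (Neg v)) M))"
    using bool_step_insert[OF bool_rule.NOT1, of x v "insert (Con (OrC v y z)) M"] assms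
    by (simp add: insert_commute)
  moreover have "bool_step (insert (Con (OrC v y z)) (insert (Lit (Neg v)) M))
                   (M \<union> {Lit (Neg v), Lit (Pos y)})"
    using bool_step_insert[OF bool_rule.OR3, of v y z "insert (Lit (Neg v)) M"] assms
    by (simp add: insert_commute)
  ultimately show ?thesis
    using bool_derives_le_Suc bool_derives_le_refl by (metis numeral_2_eq_2)
qed

lemma bool_derives_resolve_Pos_head:
  assumes "Lit (Neg x) \<in> M" "Lit (Pos z) \<in> M" "Con (OrC x y z) \<notin> M"
  shows "bool_derives_le 1 (insert (Con (OrC x y z)) M) (M \<union> {Lit (Pos y)})"
  using bool_step_insert[OF bool_rule.OR3, of x y z M] assms
    bool_derives_le_Suc[OF _ bool_derives_le_refl] by simp

lemma bool_derives_unit_output: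
  assumes "Lit (Pos y) \<in> M" "Con (lit_con l y) \<notin> M"
  shows "bool_derives_le 1 (insert (Con (lit_con l y)) M) (insert (Lit l) M)"
proof -
  have "bool_rule (lit_con l y) {Pos y} {l}" by (cases l) (auto intro: bool_rule.intros)
  then show ?thesis using bool_step_insert[of "lit_con l y" "{Pos y}" "{l}" M] assms
      bool_derives_le_Suc[OF _ bool_derives_le_refl] by simp
qed

section \<open>Simulating a unit propagation step\<close>

text \<open>The resolved literal is placed first in the translation of the clause, so that the
  unit fires its head constraints.\<close>
lemma unit_resolution_head:
  assumes "trans_eq ls y S F" "ls \<noteq> []" "distinct ls" "comp u \<notin> set ls" "Lit u \<in> R"
    and "distinct [z, v, y]" "y \<notin> F" "{z, v} \<inter> (F \<union> var ` set ls \<union> ivars R) = {}"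
  shows "\<exists>TC FC L. trans_clause (insert (comp u) (set ls)) TC FC \<and> FC \<subseteq> {z, v, y} \<union> F
           \<and> L \<subseteq> {Pos z, Neg v}
           \<and> bool_derives_le 2 (TC \<union> R) (insert (Lit (Pos y)) S \<union> (R \<union> Lit ` L))"
proof -
  have zv: "z \<notin> ivars S" "v \<notin> ivars S" "z \<notin> ivars R" "v \<notin> ivars R"
    using trans_eq_ivars[OF assms(1)] assms(6,8) by auto
  have clause: "trans_clause (insert (comp u) (set ls)) (insert (Lit (Pos z)) S0) (insert z F0)"
    if "trans_eq (comp u # ls) z S0 F0" "z \<notin> F0" for S0 F0
    using trans_clause_of_trans_eq[OF that(1)] that(2) assms(2-4) by (cases ls) auto
  let ?M = "insert (Lit (Pos z)) S \<union> R"
  show ?thesis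
  proof (cases u)
    case (Pos x)
    let ?S0 = "{Con (NotC x v), Con (OrC v y z)} \<union> S" and ?F0 = "{v, y} \<union> F"
    have "trans_eq (Neg x # ls) z ?S0 ?F0"
      by (rule trans_eq.neg) (use assms in auto)
    then have "trans_clause (insert (comp u) (set ls)) (insert (Lit (Pos z)) ?S0) (insert z ?F0)"
      using clause assms(6,8) Pos by auto
    moreover have "bool_derives_le 2 (insert (Con (NotC x v)) (insert (Con (OrC v y z)) ?M))
                     (?M \<union> {Lit (Neg v), Lit (Pos y)})"
      using assms(5) zv
      by (intro bool_derives_resolve_Neg_head) (auto dest: item_vars_subset_ivars simp: Pos)
    then have "bool_derives_le 2 (insert (Lit (Pos z)) ?S0 \<union> R)
                 (insert (Lit (Pos y)) S \<union> (R \<union> Lit ` {Pos z, Neg v}))"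
      by (simp add: insert_commute)
    ultimately show ?thesis by blast
  next
    case (Neg x)
    let ?S0 = "insert (Con (OrC x y z)) S" and ?F0 = "insert y F"
    have "trans_eq (Pos x # ls) z ?S0 ?F0"
      by (rule trans_eq.pos) (use assms in auto)
    then have "trans_clause (insert (comp u) (set ls)) (insert (Lit (Pos z)) ?S0) (insert z ?F0)"
      using clause assms(6,8) Neg by auto
    moreover have "bool_derives_le 1 (insert (Con (OrC x y z)) ?M) (?M \<union> {Lit (Pos y)})"
      using assms(5) zv
      by (intro bool_derives_resolve_Pos_head) (auto dest: item_vars_subset_ivars simp: Neg)
    then have "bool_derives_le 1 (insert (Lit (Pos z)) ?S0 \<union> R)
                 (insert (Lit (Pos y)) S \<union> (R \<union> Lit ` {Pos z}))"
      by (simp add: insert_commute)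
    then have "bool_derives_le 2 (insert (Lit (Pos z)) ?S0 \<union> R)
                 (insert (Lit (Pos y)) S \<union> (R \<union> Lit ` {Pos z}))"
      by (rule bool_derives_le_mono) simp
    ultimately show ?thesis by blast
  qed
qed

text \<open>A unit clause is translated as the literal itself rather than through an output
  variable, so in that case one more step is needed.\<close>
lemma trans_clause_from_true_output:
  assumes "trans_eq ls y S F" "distinct ls" "y \<notin> F" "y \<notin> var ` set ls" "y \<notin> ivars M"
  shows "\<exists>TC FC L. trans_clause (set ls) TC FC \<and> FC \<subseteq> insert y F \<and> L \<subseteq> {Pos y}
           \<and> (\<forall>l\<in>L. var l \<notin> ivars TC)
           \<and> bool_derives_le 1 (insert (Lit (Pos y)) S \<union> M) (TC \<union> M \<union> Lit ` L)"
proof (cases "length ls \<ge> 2")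
  case True
  then show ?thesis
    using trans_clause_of_trans_eq[OF assms(1,2) True assms(3)] bool_derives_le_refl
    by (intro exI[of _ "insert (Lit (Pos y)) S"] exI[of _ "insert y F"] exI[of _ "{}"]) auto
next
  case False
  then have "length ls = Suc 0"
    using trans_eq_nonempty[OF assms(1)] by (cases ls) (auto simp: Suc_le_eq)
  then obtain l where l: "ls = [l]" by (auto simp: length_Suc_conv)
  have S: "S = {Con (lit_con l y)}" using trans_eq_singleton[of l y S F] assms(1) l by simp
  have "y \<in> item_vars (Con (lit_con l y))" by (cases l) auto
  then have "Con (lit_con l y) \<notin> M"
    using item_vars_subset_ivars[of "Con (lit_con l y)" M] assms(5) by blast
  then have "bool_derives_le 1 (insert (Con (lit_con l y)) (insert (Lit (Pos y)) M))
               (insert (Lit l) (insert (Lit (Pos y)) M))"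
    by (intro bool_derives_unit_output) simp_all
  then have "bool_derives_le 1 (insert (Lit (Pos y)) S \<union> M) ({Lit l} \<union> M \<union> Lit ` {Pos y})"
    unfolding S by (simp add: insert_commute)
  moreover have "trans_clause (set ls) {Lit l} {}"
    unfolding trans_clause_def l by (intro disjI1 exI[of _ l]) simp
  moreover have "\<forall>l'\<in>{Pos y}. var l' \<notin> ivars {Lit l}" using assms(4) l by auto
  ultimately show ?thesis by blast
qed

lemma unit_resolution_derivation:
  assumes "trans_eq ls y S F" "distinct ls" "ls \<noteq> []" "comp u \<notin> set ls" "Lit u \<in> R"
    and "distinct [z, v, y]" "{z, v, y} \<inter> (F \<union> var ` set ls \<union> ivars R) = {}"
  shows "\<exists>TC FC TC' FC' L. trans_clause (insert (comp u) (set ls)) TC FC \<and> FC \<subseteq> {z, v, y} \<union> F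
           \<and> trans_clause (set ls) TC' FC' \<and> FC' \<subseteq> insert y F \<and> finite L
           \<and> bool_derives_le 3 (TC \<union> R) (TC' \<union> R \<union> Lit ` L) \<and> sem_follows (TC' \<union> R) (Lit ` L)"
proof -
  have "y \<notin> F" "{z, v} \<inter> (F \<union> var ` set ls \<union> ivars R) = {}" using assms(7) by auto
  then obtain TC FC L0 where head: "trans_clause (insert (comp u) (set ls)) TC FC"
      "FC \<subseteq> {z, v, y} \<union> F" "L0 \<subseteq> {Pos z, Neg v}"
      "bool_derives_le 2 (TC \<union> R) (insert (Lit (Pos y)) S \<union> (R \<union> Lit ` L0))"
    using unit_resolution_head[OF assms(1,3,2,4,5,6)] by blast
  have "y \<notin> ivars (R \<union> Lit ` L0)" "y \<notin> var ` set ls" using assms(6,7) head(3) by auto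
  then obtain TC' FC' L1 where close: "trans_clause (set ls) TC' FC'" "FC' \<subseteq> insert y F"
      "L1 \<subseteq> {Pos y}" "\<forall>l\<in>L1. var l \<notin> ivars TC'"
      "bool_derives_le 1 (insert (Lit (Pos y)) S \<union> (R \<union> Lit ` L0))
         (TC' \<union> (R \<union> Lit ` L0) \<union> Lit ` L1)"
    using trans_clause_from_true_output[OF assms(1,2) \<open>y \<notin> F\<close>] by blast
  have "bool_derives_le 3 (TC \<union> R) (TC' \<union> R \<union> Lit ` (L0 \<union> L1))"
    using bool_derives_le_trans[OF head(4) close(5)] by (simp add: Un_ac image_Un)
  moreover have "sem_follows (TC' \<union> R) (Lit ` (L0 \<union> L1))"
  proof (rule sem_follows_fresh_lits)
    have "ivars TC' \<subseteq> var ` set ls \<union> insert y F"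
      using trans_clause_ivars[OF close(1)] close(2) by auto
    moreover have "var ` L0 \<subseteq> {z, v}" "var ` L1 \<subseteq> {y}" using head(3) close(3) by auto
    ultimately show "\<forall>l\<in>L0 \<union> L1. var l \<notin> ivars (TC' \<union> R)" using close(4) assms(6,7) by auto
    have "\<forall>l\<in>{Pos z, Neg v, Pos y}. comp l \<notin> {Pos z, Neg v, Pos y}" using assms(6) by auto
    then show "\<forall>l\<in>L0 \<union> L1. comp l \<notin> L0 \<union> L1" using head(3) close(3) by blast
  qed
  moreover have "finite (L0 \<union> L1)" using head(3) close(3) finite_subset by auto
  ultimately show ?thesis using head(1,2) close(1,2) by blast
qed

lemma fresh_vars3E:
  assumes "infinite (UNIV :: 'v set)" "finite B"
  obtains z v y :: 'v where "distinct [z, v, y]" "{z, v, y} \<inter> B = {}"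
proof -
  obtain z where "z \<notin> B" using ex_new_if_finite[OF assms] by blast
  obtain v where "v \<notin> insert z B"
    using ex_new_if_finite[OF assms(1) finite.insertI[OF assms(2)]] by blast
  obtain y where "y \<notin> insert v (insert z B)"
    using ex_new_if_finite[OF assms(1) finite.insertI[OF finite.insertI[OF assms(2)]]] by blast
  show thesis by (rule that[of z v y]) (use \<open>z \<notin> B\<close> \<open>v \<notin> insert z B\<close> \<open>y \<notin> _\<close> in auto)
qed

lemma translations_of_entailed_clause:
  fixes \<phi> :: "'v clause set"
  assumes "infinite (UNIV :: 'v set)" "finite \<phi>" "\<forall>D\<in>\<phi>. finite D \<and> D \<noteq> {}"
    and "finite C" "C \<noteq> {}" "C \<notin> \<phi>" "entails \<phi> C"
  shows "\<exists>S2 \<C>. is_translation (insert C \<phi>) (S2 \<union> \<C>) \<and> is_translation \<phi> S2 \<and> finite \<C>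
           \<and> sem_follows S2 \<C>"
proof -
  let ?A = "vars (insert C \<phi>)"
  have "finite ?A" using assms(2-4) by (auto simp: vars_def)
  then obtain S Fs where S: "fresh_translation \<phi> S ?A Fs" "finite Fs"
    using fresh_translation_exists[OF assms(1-3)] by blast
  obtain TC FC where TC: "trans_clause C TC FC" "FC \<inter> (?A \<union> Fs) = {}"
    using trans_clause_exists[OF assms(1,4,5), of "?A \<union> Fs"] \<open>finite ?A\<close> S(2) by auto
  have "is_translation (insert C \<phi>) (TC \<union> S)"
    using fresh_translation_insert[OF S(1) assms(6) TC] by (rule is_translation_if_fresh) simp
  then have "is_translation (insert C \<phi>) (S \<union> TC)" by (simp add: Un_commute)
  moreover have "is_translation \<phi> S"
    using S(1) by (rule is_translation_if_fresh) (auto simp: vars_def)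
  moreover have "sem_follows S TC"
  proof (rule sem_follows_trans_clause[OF TC(1)])
    show "FC \<inter> (ivars S \<union> var ` C) = {}"
      using TC(2) fresh_translation_ivars[OF S(1)] by (auto simp: vars_def)
    show "clause_val \<sigma> C" if "sat \<sigma> S" for \<sigma>
      using assms(7) fresh_translation_sound[OF S(1) that] unfolding entails_def by blast
  qed
  ultimately show ?thesis using trans_clause_finite[OF TC(1)] by blast
qed

lemma translations_of_unit_resolution:
  fixes R :: "'v clause set"
  assumes "infinite (UNIV :: 'v set)" "finite R" "\<forall>D\<in>R. finite D \<and> D \<noteq> {}" "{u} \<in> R"
    and "finite C" "C \<noteq> {}" "comp u \<notin> C" "C \<notin> R" "insert (comp u) C \<notin> R"
  shows "\<exists>S1 S2 \<C>. is_translation (insert (insert (comp u) C) R) S1 \<and> is_translation (insert C R) S2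
           \<and> finite \<C> \<and> bool_derives_le 3 S1 (S2 \<union> \<C>) \<and> sem_follows S2 \<C>"
proof -
  let ?A = "vars (insert (insert (comp u) C) R)"
  have "finite ?A" using assms(2,3,5) by (auto simp: vars_def)
  then obtain SR Fs where SR: "fresh_translation R SR ?A Fs" "finite Fs"
    using fresh_translation_exists[OF assms(1-3)] by blast
  have "ivars SR \<subseteq> ?A \<union> Fs" using fresh_translation_ivars[OF SR(1)] by (auto simp: vars_def)
  have "finite (?A \<union> Fs)" using \<open>finite ?A\<close> SR(2) by simp
  then obtain z v y where zvy: "distinct [z, v, y]" "{z, v, y} \<inter> (?A \<union> Fs) = {}"
    by (rule fresh_vars3E[OF assms(1)])
  obtain ls where ls: "distinct ls" "set ls = C" using finite_distinct_list[OF assms(5)] by blast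
  then have "ls \<noteq> []" using assms(6) by auto
  then obtain S F where S: "trans_eq ls y S F" "F \<inter> ({z, v, y} \<union> ?A \<union> Fs) = {}"
    using trans_eq_exists[OF assms(1), of ls "{z, v, y} \<union> ?A \<union> Fs" y] \<open>finite ?A\<close> SR(2) by auto
  have "{z, v, y} \<inter> (F \<union> var ` set ls \<union> ivars SR) = {}"
    using zvy(2) S(2) ls(2) \<open>ivars SR \<subseteq> ?A \<union> Fs\<close> by (auto simp: vars_def)
  then obtain TC FC TC' FC' L where
    TC: "trans_clause (insert (comp u) C) TC FC" "FC \<subseteq> {z, v, y} \<union> F" and
    TC': "trans_clause C TC' FC'" "FC' \<subseteq> insert y F" and
    derivation: "finite L" "bool_derives_le 3 (TC \<union> SR) (TC' \<union> SR \<union> Lit ` L)"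
      "sem_follows (TC' \<union> SR) (Lit ` L)"
    using unit_resolution_derivation[OF S(1) ls(1) \<open>ls \<noteq> []\<close> _
        fresh_translation_unit[OF SR(1) assms(4)] zvy(1)] ls(2) assms(7)
    by blast
  have "FC \<inter> (?A \<union> Fs) = {}" "FC' \<inter> (?A \<union> Fs) = {}"
    using TC(2) TC'(2) zvy(2) S(2) by auto
  then have "is_translation (insert (insert (comp u) C) R) (TC \<union> SR)"
    and "is_translation (insert C R) (TC' \<union> SR)"
    using fresh_translation_insert[OF SR(1) assms(9) TC(1)]
      fresh_translation_insert[OF SR(1) assms(8) TC'(1)]
    by (auto intro!: is_translation_if_fresh simp: vars_def)
  with derivation show ?thesis by blast
qed

lemma unit_stepE:
  assumes "unit_step \<phi>1 \<phi>2"
  obtains (entailed) C where "\<phi>1 = insert C \<phi>2" "C \<notin> \<phi>2" "C \<noteq> {}" "entails \<phi>2 C"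
    | (resolvent) u C R where "\<phi>1 = insert (insert (comp u) C) R" "\<phi>2 = insert C R" "{u} \<in> R"
        "comp u \<notin> C" "C \<notin> R" "insert (comp u) C \<notin> R"
proof -
  obtain u C where u: "{u} \<in> \<phi>1" and C: "C \<in> \<phi>1"
    and step: "(comp u \<in> C \<and> \<phi>2 = (\<phi>1 - {C}) \<union> {C - {comp u}}) \<or> (u \<in> C \<and> C \<noteq> {u} \<and> \<phi>2 = \<phi>1 - {C})"
    using assms unfolding unit_step_def by blast
  define R where "R = \<phi>1 - {C}"
  have \<phi>1: "\<phi>1 = insert C R" "C \<notin> R" using C unfolding R_def by blast+
  from step show thesis
  proof (elim disjE conjE)
    assume "u \<in> C" "C \<noteq> {u}" and "\<phi>2 = \<phi>1 - {C}"
    then have \<phi>2: "\<phi>2 = R" and "{u} \<in> R" using u unfolding R_def by blast+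
    then have "entails \<phi>2 C" using \<open>u \<in> C\<close> unfolding entails_def clause_val_def by blast
    then show thesis using \<phi>1 \<phi>2 \<open>u \<in> C\<close> by (intro entailed) auto
  next
    assume "comp u \<in> C" and "\<phi>2 = (\<phi>1 - {C}) \<union> {C - {comp u}}"
    then have \<phi>2: "\<phi>2 = insert (C - {comp u}) R" unfolding R_def by blast
    have "comp u \<noteq> u" by (cases u) auto
    then have "{u} \<in> R" using u \<open>comp u \<in> C\<close> unfolding R_def by blast
    show thesis
    proof (cases "C - {comp u} \<in> R")
      case True
      then have "entails R C" unfolding entails_def clause_val_def by blast
      then show thesis using \<phi>1 \<phi>2 True \<open>comp u \<in> C\<close> by (intro entailed) (auto simp: insert_absorb)
    next
      case False
      have "insert (comp u) (C - {comp u}) = C" using \<open>comp u \<in> C\<close> by blast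
      then show thesis using \<phi>1 \<phi>2 False \<open>{u} \<in> R\<close> by (intro resolvent[of u "C - {comp u}" R]) auto
    qed
  qed
qed

theorem theorem3:
  fixes \<phi>1 \<phi>2 :: "'v clause set"
  assumes "infinite (UNIV :: 'v set)"
    and "finite \<phi>1" and "\<forall>C\<in>\<phi>1. finite C"
    and "finite \<phi>2" and "\<forall>C\<in>\<phi>2. finite C"
    and "{} \<notin> \<phi>2"
    and "unit_step \<phi>1 \<phi>2"
  shows "\<exists>S1 S2 \<C>. is_translation \<phi>1 S1 \<and> is_translation \<phi>2 S2 \<and> finite \<C>
           \<and> bool_derives_le 3 S1 (S2 \<union> \<C>) \<and> sem_follows S2 \<C>"
  using assms(7)
proof (cases rule: unit_stepE)
  case (entailed C)
  have fin: "finite C" "\<forall>D\<in>\<phi>2. finite D \<and> D \<noteq> {}" using assms(3,5,6) entailed(1) by auto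
  obtain S2 \<C> where "is_translation \<phi>1 (S2 \<union> \<C>)" "is_translation \<phi>2 S2" "finite \<C>"
      "sem_follows S2 \<C>"
    using translations_of_entailed_clause[OF assms(1,4) fin(2,1) entailed(3,2,4)]
    unfolding entailed(1)[symmetric] by blast
  then show ?thesis using bool_derives_le_refl by blast
next
  case (resolvent u C R)
  have fin: "finite R" "\<forall>D\<in>R. finite D \<and> D \<noteq> {}" "finite C" "C \<noteq> {}"
    using resolvent(2) assms(4-6) by auto
  show ?thesis unfolding resolvent(1,2)
    by (rule translations_of_unit_resolution
        [OF assms(1) fin(1,2) resolvent(3) fin(3,4) resolvent(4-6)])
qed

end
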